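(* Let $n$ be a positive integer with $n\equiv 2 \pmod 3$. Then the $(3,n;6)$-bipartite biregular cage has exactly $2+2n+\frac{(2+2n)n}{3}$ vertices, and every $(3,n;6)$-bipartite biregular cage is (isomorphic to) the incidence graph of the structure obtained from a Steiner triple system on $2n+3$ points by deleting one point and all triples containing it.
   Context: For integers $a,b\geq 2$ and even $g\ge 4$, an $(a,b;g)$-bipartite biregular graph is a finite simple bipartite graph of girth exactly $g$ in which all vertices of one bipartition class have degree $a$ and all vertices of the other class have degree $b$. An $(a,b;g)$-bipartite biregular cage is such a graph of minimum possible order. A Steiner triple system on $v$ points is a set of $v$ points with a family of 3-element subsets (triples) such that every pair of distinct points lies in exactly one triple. The incidence graph of a point-triple structure is the bipartite graph on points and triples with a point adjacent to a triple iff the point lies in it. *)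

theory Defs
  imports Main
begin

definition simple_graph :: "'a set \<Rightarrow> ('a \<Rightarrow> 'a \<Rightarrow> bool) \<Rightarrow> bool" where
  "simple_graph V E \<longleftrightarrow> finite V \<and> (\<forall>u v. E u v \<longrightarrow> u \<in> V \<and> v \<in> V)
     \<and> (\<forall>u v. E u v \<longrightarrow> E v u) \<and> (\<forall>u. \<not> E u u)"

definition degree :: "'a set \<Rightarrow> ('a \<Rightarrow> 'a \<Rightarrow> bool) \<Rightarrow> 'a \<Rightarrow> nat" where
  "degree V E v = card {w \<in> V. E v w}"

definition is_cycle :: "'a set \<Rightarrow> ('a \<Rightarrow> 'a \<Rightarrow> bool) \<Rightarrow> 'a list \<Rightarrow> bool" where
  "is_cycle V E xs \<longleftrightarrow> length xs \<ge> 3 \<and> distinct xs \<and> set xs \<subseteq> V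
     \<and> (\<forall>i < length xs. E (xs ! i) (xs ! ((i + 1) mod length xs)))"

definition has_girth :: "'a set \<Rightarrow> ('a \<Rightarrow> 'a \<Rightarrow> bool) \<Rightarrow> nat \<Rightarrow> bool" where
  "has_girth V E g \<longleftrightarrow> (\<exists>xs. is_cycle V E xs \<and> length xs = g)
     \<and> (\<forall>xs. is_cycle V E xs \<longrightarrow> g \<le> length xs)"

definition bipartite_biregular :: "nat \<Rightarrow> nat \<Rightarrow> nat \<Rightarrow> 'a set \<Rightarrow> ('a \<Rightarrow> 'a \<Rightarrow> bool) \<Rightarrow> bool" where
  "bipartite_biregular a b g V E \<longleftrightarrow> simple_graph V E \<and> has_girth V E g \<and>
     (\<exists>A B. A \<union> B = V \<and> A \<inter> B = {} \<and>
        (\<forall>u v. E u v \<longrightarrow> (u \<in> A \<and> v \<in> B) \<or> (u \<in> B \<and> v \<in> A)) \<and>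
        (\<forall>v \<in> A. degree V E v = a) \<and> (\<forall>v \<in> B. degree V E v = b))"

text \<open>Cage: minimum order among all (a,b;g)-bipartite biregular graphs. Every finite
  graph is isomorphic to one on a set of naturals, so comparing with graphs on nat suffices.\<close>
definition bb_cage :: "nat \<Rightarrow> nat \<Rightarrow> nat \<Rightarrow> 'a set \<Rightarrow> ('a \<Rightarrow> 'a \<Rightarrow> bool) \<Rightarrow> bool" where
  "bb_cage a b g V E \<longleftrightarrow> bipartite_biregular a b g V E \<and>
     (\<forall>(V' :: nat set) E'. bipartite_biregular a b g V' E' \<longrightarrow> card V \<le> card V')"

definition graph_iso :: "'a set \<Rightarrow> ('a \<Rightarrow> 'a \<Rightarrow> bool) \<Rightarrow> 'b set \<Rightarrow> ('b \<Rightarrow> 'b \<Rightarrow> bool) \<Rightarrow> bool" where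
  "graph_iso V E V' E' \<longleftrightarrow> (\<exists>f. bij_betw f V V' \<and>
     (\<forall>u \<in> V. \<forall>v \<in> V. E u v \<longleftrightarrow> E' (f u) (f v)))"

definition steiner_triple_system :: "'p set \<Rightarrow> 'p set set \<Rightarrow> bool" where
  "steiner_triple_system P T \<longleftrightarrow> finite P \<and>
     (\<forall>t \<in> T. t \<subseteq> P \<and> card t = 3) \<and>
     (\<forall>x \<in> P. \<forall>y \<in> P. x \<noteq> y \<longrightarrow> (\<exists>!t. t \<in> T \<and> x \<in> t \<and> y \<in> t))"

definition incidence_vertices :: "'p set \<Rightarrow> 'p set set \<Rightarrow> ('p + 'p set) set" where
  "incidence_vertices P T = Inl ` P \<union> Inr ` T"

fun incidence_adj :: "'p set \<Rightarrow> 'p set set \<Rightarrow> ('p + 'p set) \<Rightarrow> ('p + 'p set) \<Rightarrow> bool" where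
  "incidence_adj P T (Inl p) (Inr t) = (p \<in> P \<and> t \<in> T \<and> p \<in> t)"
| "incidence_adj P T (Inr t) (Inl p) = (p \<in> P \<and> t \<in> T \<and> p \<in> t)"
| "incidence_adj P T _ _ = False"

definition del_points :: "'p set \<Rightarrow> 'p \<Rightarrow> 'p set" where
  "del_points P x = P - {x}"

definition del_triples :: "'p set set \<Rightarrow> 'p \<Rightarrow> 'p set set" where
  "del_triples T x = {t \<in> T. x \<notin> t}"

end

theory Submission
  imports Defs
begin

(* A (3,n;6)-graph with parts A (degrees 3) and B (degrees n) has no 4-cycles, so the
   neighbourhoods of the vertices of A form a partial triple system on B in which every point
   lies on n triples, and the graph is its incidence graph.  The triples through a point p meet
   pairwise only in p, so p is collinear with exactly 2n other points and |B| >= 2n+1.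
   Double counting gives 3|A| = n|B|; as n = 2 (mod 3), 3 divides |B|, hence |B| >= 2n+2 and
   3|V| = (n+3)|B| >= (n+3)(2n+2).

   In the case of equality every point has exactly one non-collinear point.  Adding a new
   point x and the triples {x, p, q} for all non-collinear pairs p, q gives a Steiner triple
   system on 2n+3 points whose derived structure at x is the one we started from.

   The bound is attained: for n = 3m-1, deleting the point at infinity from Skolem's Steiner
   triple system on Z_2m x Z_3 plus infinity leaves 6m = 2n+2 points on n triples each, and
   this structure contains a triangle, so its incidence graph has girth 6. *)

section \<open>Graphs and graph isomorphisms\<close>

definition nbhd :: "'a set \<Rightarrow> ('a \<Rightarrow> 'a \<Rightarrow> bool) \<Rightarrow> 'a \<Rightarrow> 'a set" where
  "nbhd V E v = {w \<in> V. E v w}"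

lemma degree_eq_card_nbhd: "degree V E v = card (nbhd V E v)"
  by (simp add: degree_def nbhd_def)

lemma is_cycle_square:
  assumes "simple_graph V E" and "E u v" "E v w" "E w z" "E z u" "u \<noteq> w" "v \<noteq> z"
  shows "is_cycle V E [u, v, w, z]"
proof -
  have "u \<noteq> v" "v \<noteq> w" "w \<noteq> z" "z \<noteq> u" "u \<in> V" "v \<in> V" "w \<in> V" "z \<in> V"
    using assms unfolding simple_graph_def by metis+
  moreover have "E ([u, v, w, z] ! i) ([u, v, w, z] ! ((i + 1) mod 4))" if "i < 4" for i
  proof -
    have "i = 0 \<or> i = 1 \<or> i = 2 \<or> i = 3" using that by linarith
    then show ?thesis using assms by auto
  qed
  ultimately show ?thesis
    using assms by (simp add: is_cycle_def)
qed

lemma girth_gt_4_no_square: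
  assumes "simple_graph V E" "has_girth V E g" "4 < g"
    and "E u v" "E v w" "E w z" "E z u" "u \<noteq> w" "v \<noteq> z"
  shows False
  using is_cycle_square[OF assms(1,4-9)] assms(2,3) unfolding has_girth_def by fastforce

lemma bipartite_no_square_cycle_length_ge_6:
  assumes bipartite: "\<And>u v. E u v \<Longrightarrow> u \<in> A \<longleftrightarrow> v \<notin> A"
    and no_square: "\<And>u v w z. E u v \<Longrightarrow> E v w \<Longrightarrow> E w z \<Longrightarrow> E z u \<Longrightarrow> u \<noteq> w \<Longrightarrow> v \<noteq> z \<Longrightarrow> False"
    and cycle: "is_cycle V E xs"
  shows "6 \<le> length xs"
proof (rule ccontr)
  have edge: "E (xs ! i) (xs ! ((i + 1) mod length xs))" if "i < length xs" for i
    using cycle that by (simp add: is_cycle_def)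
  assume "\<not> 6 \<le> length xs"
  moreover have "3 \<le> length xs" using cycle by (simp add: is_cycle_def)
  ultimately consider "length xs = 3" | "length xs = 4" | "length xs = 5" by linarith
  then show False
  proof cases
    case 1
    then obtain a b c where "xs = [a, b, c]" by (auto simp: length_Suc_conv numeral_eq_Suc)
    then have "E a b" "E b c" "E c a" using edge[of 0] edge[of 1] edge[of 2] by auto
    then show False using bipartite by blast
  next
    case 2
    then obtain a b c d where xs: "xs = [a, b, c, d]" by (auto simp: length_Suc_conv numeral_eq_Suc)
    then have "E a b" "E b c" "E c d" "E d a" using edge[of 0] edge[of 1] edge[of 2] edge[of 3] by auto
    moreover have "a \<noteq> c" "b \<noteq> d" using cycle xs by (auto simp: is_cycle_def)
    ultimately show False using no_square by blast
  next
    case 3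
    then obtain a b c d e where "xs = [a, b, c, d, e]" by (auto simp: length_Suc_conv numeral_eq_Suc)
    then have "E a b" "E b c" "E c d" "E d e" "E e a"
      using edge[of 0] edge[of 1] edge[of 2] edge[of 3] edge[of 4] by auto
    then show False using bipartite by blast
  qed
qed

lemma graph_iso_sym:
  assumes "graph_iso V E V' E'"
  shows "graph_iso V' E' V E"
proof -
  obtain f where f: "bij_betw f V V'" and adj: "\<forall>u\<in>V. \<forall>v\<in>V. E u v \<longleftrightarrow> E' (f u) (f v)"
    using assms unfolding graph_iso_def by blast
  let ?g = "inv_into V f"
  have g: "bij_betw ?g V' V" using f by (rule bij_betw_inv_into)
  have "E' u v \<longleftrightarrow> E (?g u) (?g v)" if "u \<in> V'" "v \<in> V'" for u v
  proof -
    have "?g u \<in> V" "?g v \<in> V" using g that by (auto dest: bij_betwE)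
    moreover have "f (?g u) = u" "f (?g v) = v"
      using f that by (auto intro: bij_betw_inv_into_right)
    ultimately show ?thesis using adj by metis
  qed
  then show ?thesis
    using g unfolding graph_iso_def by blast
qed

lemma graph_iso_trans:
  assumes "graph_iso V E V' E'" "graph_iso V' E' V'' E''"
  shows "graph_iso V E V'' E''"
proof -
  obtain f where f: "bij_betw f V V'" and adj: "\<forall>u\<in>V. \<forall>v\<in>V. E u v \<longleftrightarrow> E' (f u) (f v)"
    using assms(1) unfolding graph_iso_def by blast
  obtain g where g: "bij_betw g V' V''" and adj': "\<forall>u\<in>V'. \<forall>v\<in>V'. E' u v \<longleftrightarrow> E'' (g u) (g v)"
    using assms(2) unfolding graph_iso_def by blast
  have "E u v \<longleftrightarrow> E'' ((g \<circ> f) u) ((g \<circ> f) v)" if "u \<in> V" "v \<in> V" for u v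
    using that adj adj' f by (simp add: bij_betwE)
  then show ?thesis
    using bij_betw_trans[OF f g] unfolding graph_iso_def by blast
qed

lemma graph_iso_card: "graph_iso V E V' E' \<Longrightarrow> card V = card V'"
  unfolding graph_iso_def by (auto intro: bij_betw_same_card)

lemma is_cycle_map:
  assumes f: "bij_betw f V V'" and adj: "\<forall>u\<in>V. \<forall>v\<in>V. E u v \<longleftrightarrow> E' (f u) (f v)"
    and cycle: "is_cycle V E xs"
  shows "is_cycle V' E' (map f xs)"
proof -
  have xs: "set xs \<subseteq> V" "distinct xs" "3 \<le> length xs"
    and edge: "\<And>i. i < length xs \<Longrightarrow> E (xs ! i) (xs ! ((i + 1) mod length xs))"
    using cycle by (auto simp: is_cycle_def)
  have "E' (map f xs ! i) (map f xs ! ((i + 1) mod length xs))" if "i < length xs" for i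
  proof -
    have "0 < length xs" using xs(3) by linarith
    then have "(i + 1) mod length xs < length xs" by (rule mod_less_divisor)
    then have "xs ! i \<in> V" "xs ! ((i + 1) mod length xs) \<in> V"
      using xs(1) that by (auto dest: nth_mem)
    then show ?thesis using adj edge[OF that] that \<open>(i + 1) mod length xs < length xs\<close> by simp
  qed
  moreover have "distinct (map f xs)"
    using xs f inj_on_subset by (auto simp: distinct_map bij_betw_def)
  moreover have "set (map f xs) \<subseteq> V'"
    using xs(1) f by (auto dest: bij_betwE)
  ultimately show ?thesis
    using xs(3) by (simp add: is_cycle_def)
qed

lemma is_cycle_graph_iso:
  assumes "graph_iso V E V' E'" "is_cycle V E xs"
  shows "\<exists>ys. is_cycle V' E' ys \<and> length ys = length xs"
proof -
  obtain f where f: "bij_betw f V V'" and adj: "\<forall>u\<in>V. \<forall>v\<in>V. E u v \<longleftrightarrow> E' (f u) (f v)"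
    using assms(1) unfolding graph_iso_def by blast
  show ?thesis
    using is_cycle_map[OF f adj assms(2)] by (intro exI[of _ "map f xs"]) simp
qed

lemma has_girth_graph_iso:
  assumes iso: "graph_iso V E V' E'" and girth: "has_girth V E g"
  shows "has_girth V' E' g"
proof -
  obtain xs where "is_cycle V E xs" "length xs = g"
    using girth unfolding has_girth_def by blast
  then have "\<exists>ys. is_cycle V' E' ys \<and> length ys = g"
    using is_cycle_graph_iso[OF iso] by metis
  moreover have "g \<le> length ys" if ys: "is_cycle V' E' ys" for ys
  proof -
    obtain xs where "is_cycle V E xs" "length xs = length ys"
      using is_cycle_graph_iso[OF graph_iso_sym[OF iso] ys] by blast
    then show ?thesis using girth unfolding has_girth_def by metis
  qed
  ultimately show ?thesis
    unfolding has_girth_def by blast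
qed

lemma degree_map:
  assumes f: "bij_betw f V V'" and adj: "\<forall>u\<in>V. \<forall>v\<in>V. E u v \<longleftrightarrow> E' (f u) (f v)"
    and v: "v \<in> V"
  shows "degree V' E' (f v) = degree V E v"
proof -
  have "nbhd V' E' (f v) = f ` nbhd V E v"
    using f adj v unfolding nbhd_def bij_betw_def by auto
  moreover have "inj_on f (nbhd V E v)"
    using f inj_on_subset[of f V "nbhd V E v"] by (auto simp: bij_betw_def nbhd_def)
  ultimately show ?thesis
    by (simp add: degree_eq_card_nbhd card_image)
qed

lemma bipartite_biregular_graph_iso:
  assumes "simple_graph V' E'" "graph_iso V E V' E'" "bipartite_biregular a b g V E"
  shows "bipartite_biregular a b g V' E'"
proof -
  obtain f where f: "bij_betw f V V'" and adj: "\<forall>u\<in>V. \<forall>v\<in>V. E u v \<longleftrightarrow> E' (f u) (f v)"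
    using assms(2) unfolding graph_iso_def by blast
  obtain A B where parts: "A \<union> B = V" "A \<inter> B = {}"
    and edges: "\<forall>u v. E u v \<longrightarrow> (u \<in> A \<and> v \<in> B) \<or> (u \<in> B \<and> v \<in> A)"
    and deg: "\<forall>v \<in> A. degree V E v = a" "\<forall>v \<in> B. degree V E v = b"
    using assms(3) unfolding bipartite_biregular_def by blast
  have edges': "E' u v \<longrightarrow> (u \<in> f ` A \<and> v \<in> f ` B) \<or> (u \<in> f ` B \<and> v \<in> f ` A)" for u v
  proof
    assume "E' u v"
    then have "u \<in> V'" "v \<in> V'" using assms(1) by (auto simp: simple_graph_def)
    then obtain x y where "x \<in> V" "y \<in> V" "u = f x" "v = f y" "E x y"
      using f adj \<open>E' u v\<close> unfolding bij_betw_def by blast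
    then show "(u \<in> f ` A \<and> v \<in> f ` B) \<or> (u \<in> f ` B \<and> v \<in> f ` A)"
      using edges by blast
  qed
  have cover': "f ` A \<union> f ` B = V'"
    using parts f unfolding bij_betw_def by auto
  have disjoint': "f ` A \<inter> f ` B = {}"
    using parts f inj_on_image_Int[of f V A B] unfolding bij_betw_def by auto
  have deg': "\<forall>v \<in> f ` A. degree V' E' v = a" "\<forall>v \<in> f ` B. degree V' E' v = b"
    using deg parts degree_map[OF f adj] by auto
  have "has_girth V' E' g"
    using assms(2,3) has_girth_graph_iso unfolding bipartite_biregular_def by blast
  then show ?thesis
    unfolding bipartite_biregular_def using assms(1) edges' cover' disjoint' deg' by blast
qed

lemma ex_graph_iso_nat:
  assumes "simple_graph V E"
  shows "\<exists>(V' :: nat set) E'. simple_graph V' E' \<and> graph_iso V E V' E'"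
proof -
  have fin: "finite V" using assms by (simp add: simple_graph_def)
  then obtain f where f: "bij_betw f V {0..<card V}" using ex_bij_betw_finite_nat by blast
  let ?g = "inv_into V f"
  define E' where "E' u v \<longleftrightarrow> u \<in> f ` V \<and> v \<in> f ` V \<and> E (?g u) (?g v)" for u v
  have "inj_on f V" using f by (simp add: bij_betw_def)
  then have "graph_iso V E (f ` V) E'"
    unfolding graph_iso_def E'_def by (intro exI[of _ f]) (auto simp: bij_betw_def)
  moreover have "simple_graph (f ` V) E'"
    using assms fin unfolding simple_graph_def E'_def by auto
  ultimately show ?thesis by blast
qed

lemma bipartite_biregular_nat:
  assumes "bipartite_biregular a b g V E"
  shows "\<exists>(V' :: nat set) E'. bipartite_biregular a b g V' E' \<and> graph_iso V E V' E'"
proof -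
  have "simple_graph V E" using assms by (simp add: bipartite_biregular_def)
  then obtain V' :: "nat set" and E' where "simple_graph V' E'" "graph_iso V E V' E'"
    using ex_graph_iso_nat by blast
  then show ?thesis using bipartite_biregular_graph_iso assms by blast
qed

section \<open>Partial triple systems\<close>

definition partial_triple_system :: "'p set \<Rightarrow> 'p set set \<Rightarrow> bool" where
  "partial_triple_system P T \<longleftrightarrow> finite P \<and> (\<forall>t \<in> T. t \<subseteq> P \<and> card t = 3) \<and>
     (\<forall>t \<in> T. \<forall>t' \<in> T. \<forall>p q. p \<noteq> q \<and> p \<in> t \<and> q \<in> t \<and> p \<in> t' \<and> q \<in> t' \<longrightarrow> t = t')"

definition collinear :: "'p set set \<Rightarrow> 'p \<Rightarrow> 'p \<Rightarrow> bool" where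
  "collinear T p q \<longleftrightarrow> (\<exists>t \<in> T. p \<in> t \<and> q \<in> t)"

definition replication_number :: "'p set \<Rightarrow> 'p set set \<Rightarrow> nat \<Rightarrow> bool" where
  "replication_number P T r \<longleftrightarrow> (\<forall>p \<in> P. card {t \<in> T. p \<in> t} = r)"

(* The three points are necessarily distinct: if two of them coincided, the triple through the
   remaining pair would contain all three. *)
definition has_triangle :: "'p set set \<Rightarrow> bool" where
  "has_triangle T \<longleftrightarrow> (\<exists>p q s. collinear T p q \<and> collinear T q s \<and> collinear T s p \<and>
     \<not> (\<exists>t \<in> T. p \<in> t \<and> q \<in> t \<and> s \<in> t))"

lemma collinearI: "t \<in> T \<Longrightarrow> p \<in> t \<Longrightarrow> q \<in> t \<Longrightarrow> collinear T p q"
  by (auto simp: collinear_def)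

lemma collinear_commute: "collinear T p q \<longleftrightarrow> collinear T q p"
  by (auto simp: collinear_def)

lemma partial_triple_systemD:
  assumes "partial_triple_system P T"
  shows "finite P" and "\<And>t. t \<in> T \<Longrightarrow> t \<subseteq> P" and "\<And>t. t \<in> T \<Longrightarrow> card t = 3"
    and "\<And>t t' p q. t \<in> T \<Longrightarrow> t' \<in> T \<Longrightarrow> p \<noteq> q \<Longrightarrow> p \<in> t \<Longrightarrow> q \<in> t \<Longrightarrow> p \<in> t' \<Longrightarrow> q \<in> t' \<Longrightarrow> t = t'"
  using assms unfolding partial_triple_system_def by blast+

lemma partial_triple_system_finite_blocks:
  assumes "partial_triple_system P T"
  shows "finite T"
proof -
  have "T \<subseteq> Pow P" using partial_triple_systemD(2)[OF assms] by blast
  then show ?thesis using partial_triple_systemD(1)[OF assms] by (rule finite_subset[OF _ finite_Pow_iff[THEN iffD2]])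
qed

(* The triples through p meet pairwise only in p. *)
lemma card_collinear_points:
  assumes "partial_triple_system P T"
  shows "card (\<Union>{t \<in> T. p \<in> t} - {p}) = 2 * card {t \<in> T. p \<in> t}"
proof -
  let ?I = "{t \<in> T. p \<in> t}"
  have fin: "finite ?I" using partial_triple_system_finite_blocks[OF assms] by simp
  have "\<Union>?I - {p} = (\<Union>t \<in> ?I. t - {p})" by blast
  also have "card \<dots> = (\<Sum>t \<in> ?I. card (t - {p}))"
  proof (rule card_UN_disjoint[OF fin])
    show "\<forall>t \<in> ?I. finite (t - {p})"
      using partial_triple_systemD(1,2)[OF assms] by (auto intro: finite_subset)
    show "\<forall>t \<in> ?I. \<forall>t' \<in> ?I. t \<noteq> t' \<longrightarrow> (t - {p}) \<inter> (t' - {p}) = {}"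
      using partial_triple_systemD(4)[OF assms] by blast
  qed
  also have "\<dots> = (\<Sum>t \<in> ?I. 2)"
    using partial_triple_systemD(3)[OF assms] by (intro sum.cong) (auto simp: card_Diff_singleton_if)
  finally show ?thesis by simp
qed

lemma three_card_blocks:
  assumes "partial_triple_system P T" "replication_number P T r"
  shows "3 * card T = r * card P"
proof -
  have "(\<Sum>p \<in> P. card {t \<in> T. p \<in> t}) = 3 * card T"
  proof (rule sum_multicount)
    show "finite P" "finite T"
      using assms(1) partial_triple_systemD(1) partial_triple_system_finite_blocks by blast+
    have "{p \<in> P. p \<in> t} = t" if "t \<in> T" for t
      using partial_triple_systemD(2)[OF assms(1) that] by blast
    then show "\<forall>t \<in> T. card {p \<in> P. p \<in> t} = 3"
      using partial_triple_systemD(3)[OF assms(1)] by simp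
  qed
  then show ?thesis
    using assms(2) unfolding replication_number_def by (simp add: mult.commute)
qed

lemma card_points_ge:
  assumes "partial_triple_system P T" "replication_number P T r" "p \<in> P"
  shows "2 * r + 1 \<le> card P"
proof -
  have fin: "finite P" using assms(1) by (rule partial_triple_systemD)
  have "\<Union>{t \<in> T. p \<in> t} - {p} \<subseteq> P - {p}"
    using partial_triple_systemD(2)[OF assms(1)] by blast
  then have "card (\<Union>{t \<in> T. p \<in> t} - {p}) \<le> card (P - {p})"
    using fin by (intro card_mono) auto
  moreover have "card (\<Union>{t \<in> T. p \<in> t} - {p}) = 2 * r"
    using card_collinear_points[OF assms(1)] assms(2,3) unfolding replication_number_def by simp
  moreover have "card (P - {p}) + 1 = card P"
    using fin assms(3) card_gt_0_iff[of P] by (auto simp: card_Diff_singleton)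
  ultimately show ?thesis by linarith
qed

lemma card_points_ge_mod_3:
  assumes "partial_triple_system P T" "replication_number P T r" "P \<noteq> {}" "r mod 3 = 2"
  shows "2 * r + 2 \<le> card P"
proof -
  have ge: "2 * r + 1 \<le> card P" using assms(1-3) card_points_ge by (metis all_not_in_conv)
  have "(r * card P) mod 3 = 0"
    using three_card_blocks[OF assms(1,2)] by (metis mod_mult_self1_is_0 mult.commute)
  then have "(2 * (card P mod 3)) mod 3 = 0"
    using assms(4) by (metis mod_mult_eq)
  then have "card P mod 3 = 0" by presburger
  moreover have "(2 * r + 1) mod 3 = 2" using assms(4) by presburger
  ultimately have "card P \<noteq> 2 * r + 1" by auto
  then show ?thesis using ge by linarith
qed

lemma unique_noncollinear:
  assumes pts: "partial_triple_system P T" and "replication_number P T r" "card P = 2 * r + 2"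
    and p: "p \<in> P"
  shows "\<exists>!q. q \<in> P \<and> q \<noteq> p \<and> \<not> collinear T p q"
proof -
  let ?C = "\<Union>{t \<in> T. p \<in> t} - {p}"
  have fin: "finite P" using pts by (rule partial_triple_systemD)
  have C: "?C \<subseteq> P - {p}" using partial_triple_systemD(2)[OF pts] by blast
  have "card (P - {p} - ?C) = card (P - {p}) - card ?C"
    using C fin by (intro card_Diff_subset) (auto dest: finite_subset)
  also have "\<dots> = 1"
    using card_collinear_points[OF pts, of p] assms(2-4) fin
    unfolding replication_number_def by (simp add: card_Diff_singleton)
  finally obtain q where "P - {p} - ?C = {q}" by (rule card_1_singletonE)
  moreover have "P - {p} - ?C = {q. q \<in> P \<and> q \<noteq> p \<and> \<not> collinear T p q}"
    by (auto simp: collinear_def)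
  ultimately show ?thesis by (intro ex1I[of _ q]) blast+
qed

definition mate_triples :: "'p set \<Rightarrow> 'p set set \<Rightarrow> 'p \<Rightarrow> 'p set set" where
  "mate_triples P T x = {{x, p, q} | p q. p \<in> P \<and> q \<in> P \<and> p \<noteq> q \<and> \<not> collinear T p q}"

context
  fixes P :: "'p set" and T :: "'p set set" and x :: 'p
  assumes pts: "partial_triple_system P T"
    and mate: "\<And>p. p \<in> P \<Longrightarrow> \<exists>!q. q \<in> P \<and> q \<noteq> p \<and> \<not> collinear T p q"
    and fresh: "x \<notin> P"
begin

lemma fresh_notin_block: "t \<in> T \<Longrightarrow> x \<notin> t"
  using partial_triple_systemD(2)[OF pts] fresh by blast

lemma mate_extension_new_point:
  assumes p: "p \<in> P"
  shows "\<exists>!t. t \<in> T \<union> mate_triples P T x \<and> x \<in> t \<and> p \<in> t"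
proof -
  obtain q where q: "q \<in> P" "q \<noteq> p" "\<not> collinear T p q"
    and q_unique: "\<And>q'. q' \<in> P \<Longrightarrow> q' \<noteq> p \<Longrightarrow> \<not> collinear T p q' \<Longrightarrow> q' = q"
    using mate[OF p] by metis
  show ?thesis
  proof (rule ex1I[of _ "{x, p, q}"])
    show "{x, p, q} \<in> T \<union> mate_triples P T x \<and> x \<in> {x, p, q} \<and> p \<in> {x, p, q}"
      unfolding mate_triples_def using p q by blast
  next
    fix t assume t: "t \<in> T \<union> mate_triples P T x \<and> x \<in> t \<and> p \<in> t"
    then have "t \<in> mate_triples P T x" using fresh_notin_block by blast
    then obtain p' q' where t': "t = {x, p', q'}" "p' \<in> P" "q' \<in> P" "p' \<noteq> q'" "\<not> collinear T p' q'"
      unfolding mate_triples_def by blast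
    then have "p = p' \<and> q' = q \<or> p = q' \<and> p' = q"
      using t fresh p q_unique collinear_commute by (metis insertE singletonD)
    then show "t = {x, p, q}" using t' by auto
  qed
qed

lemma mate_extension_old_points:
  assumes p: "p \<in> P" and q: "q \<in> P" and pq: "p \<noteq> q"
  shows "\<exists>!t. t \<in> T \<union> mate_triples P T x \<and> p \<in> t \<and> q \<in> t"
proof -
  have mate_triple_eq: "t = {x, p, q} \<and> \<not> collinear T p q"
    if t_mate: "t \<in> mate_triples P T x" and t_pq: "p \<in> t" "q \<in> t" for t
  proof -
    obtain p' q' where t: "t = {x, p', q'}" "\<not> collinear T p' q'"
      using t_mate unfolding mate_triples_def by blast
    then have "p = p' \<and> q = q' \<or> p = q' \<and> q = p'"
      using t_pq pq p q fresh by blast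
    then show ?thesis using t collinear_commute by (metis insert_commute)
  qed
  show ?thesis
  proof (cases "collinear T p q")
    case True
    then obtain t0 where t0: "t0 \<in> T" "p \<in> t0" "q \<in> t0" unfolding collinear_def by blast
    show ?thesis
    proof (rule ex1I[of _ t0])
      fix t assume "t \<in> T \<union> mate_triples P T x \<and> p \<in> t \<and> q \<in> t"
      then show "t = t0"
        using partial_triple_systemD(4)[OF pts _ t0(1) pq] t0 mate_triple_eq True by blast
    qed (use t0 in blast)
  next
    case False
    show ?thesis
    proof (rule ex1I[of _ "{x, p, q}"])
      show "{x, p, q} \<in> T \<union> mate_triples P T x \<and> p \<in> {x, p, q} \<and> q \<in> {x, p, q}"
        unfolding mate_triples_def using p q pq False by blast
    next
      fix t assume "t \<in> T \<union> mate_triples P T x \<and> p \<in> t \<and> q \<in> t"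
      then show "t = {x, p, q}"
        using mate_triple_eq False unfolding collinear_def by blast
    qed
  qed
qed

lemma steiner_triple_system_mate_extension:
  "steiner_triple_system (insert x P) (T \<union> mate_triples P T x)"
  unfolding steiner_triple_system_def
proof (intro conjI ballI impI)
  show "finite (insert x P)" using partial_triple_systemD(1)[OF pts] by simp
next
  fix t assume t: "t \<in> T \<union> mate_triples P T x"
  show "t \<subseteq> insert x P"
    using t partial_triple_systemD(2)[OF pts] unfolding mate_triples_def by blast
  show "card t = 3"
  proof (cases "t \<in> T")
    case True
    then show ?thesis by (rule partial_triple_systemD(3)[OF pts])
  next
    case False
    then obtain p q where "t = {x, p, q}" "p \<in> P" "q \<in> P" "p \<noteq> q"
      using t unfolding mate_triples_def by blast
    moreover have "x \<noteq> p" "x \<noteq> q" using \<open>p \<in> P\<close> \<open>q \<in> P\<close> fresh by auto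
    ultimately show ?thesis by simp
  qed
next
  fix y z assume "y \<in> insert x P" "z \<in> insert x P" "y \<noteq> z"
  then consider "y = x" "z \<in> P" | "z = x" "y \<in> P" | "y \<in> P" "z \<in> P"
    by blast
  then show "\<exists>!t. t \<in> T \<union> mate_triples P T x \<and> y \<in> t \<and> z \<in> t"
  proof cases
    case 1
    then show ?thesis using mate_extension_new_point by simp
  next
    case 2
    then show ?thesis using mate_extension_new_point[of y] by (simp add: conj_commute)
  next
    case 3
    then show ?thesis using mate_extension_old_points \<open>y \<noteq> z\<close> by simp
  qed
qed

lemma del_mate_extension:
  "del_points (insert x P) x = P" "del_triples (T \<union> mate_triples P T x) x = T"
  using fresh fresh_notin_block unfolding del_points_def del_triples_def mate_triples_def by auto

end

section \<open>Incidence graphs of partial triple systems\<close>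

lemma incidence_adj_iff:
  "incidence_adj P T u v \<longleftrightarrow>
     (\<exists>p t. p \<in> P \<and> t \<in> T \<and> p \<in> t \<and> (u = Inl p \<and> v = Inr t \<or> u = Inr t \<and> v = Inl p))"
  by (cases u; cases v) auto

lemma simple_graph_incidence:
  "finite P \<Longrightarrow> finite T \<Longrightarrow> simple_graph (incidence_vertices P T) (incidence_adj P T)"
  unfolding simple_graph_def incidence_vertices_def by (auto simp: incidence_adj_iff)

lemma card_incidence_vertices:
  "finite P \<Longrightarrow> finite T \<Longrightarrow> card (incidence_vertices P T) = card P + card T"
  unfolding incidence_vertices_def by (subst card_Un_disjoint) (auto simp: card_image)

lemma three_card_incidence_vertices:
  assumes "partial_triple_system P T" "replication_number P T r"
  shows "3 * card (incidence_vertices P T) = (r + 3) * card P"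
proof -
  have "card (incidence_vertices P T) = card P + card T"
    using partial_triple_systemD(1)[OF assms(1)] partial_triple_system_finite_blocks[OF assms(1)]
    by (rule card_incidence_vertices)
  then show ?thesis using three_card_blocks[OF assms] by (simp add: algebra_simps)
qed

lemma incidence_no_square:
  assumes "partial_triple_system P T"
    and "incidence_adj P T u v" "incidence_adj P T v w" "incidence_adj P T w z" "incidence_adj P T z u"
    and "u \<noteq> w" "v \<noteq> z"
  shows False
proof -
  have "\<exists>p q t t'. p \<noteq> q \<and> t \<noteq> t' \<and> t \<in> T \<and> t' \<in> T \<and> p \<in> t \<and> q \<in> t \<and> p \<in> t' \<and> q \<in> t'"
  proof (cases u)
    case (Inl p)
    then obtain t q t' where "v = Inr t" "w = Inl q" "z = Inr t'"
      using assms(2-4) by (cases v; cases w; cases z) auto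
    then show ?thesis
      using assms(2-7) Inl by (intro exI[of _ p] exI[of _ q] exI[of _ t] exI[of _ t']) auto
  next
    case (Inr t)
    then obtain p t' q where "v = Inl p" "w = Inr t'" "z = Inl q"
      using assms(2-4) by (cases v; cases w; cases z) auto
    then show ?thesis
      using assms(2-7) Inr by (intro exI[of _ p] exI[of _ q] exI[of _ t] exI[of _ t']) auto
  qed
  then show False
    using partial_triple_systemD(4)[OF assms(1)] by metis
qed

lemma incidence_hexagon:
  assumes "partial_triple_system P T" "has_triangle T"
  shows "\<exists>xs. is_cycle (incidence_vertices P T) (incidence_adj P T) xs \<and> length xs = 6"
proof -
  obtain p q s t1 t2 t3 where t: "t1 \<in> T" "t2 \<in> T" "t3 \<in> T"
    and inc: "p \<in> t1" "q \<in> t1" "q \<in> t2" "s \<in> t2" "s \<in> t3" "p \<in> t3"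
    and no_block: "\<not> (\<exists>t \<in> T. p \<in> t \<and> q \<in> t \<and> s \<in> t)"
    using assms(2) unfolding has_triangle_def collinear_def by metis
  have pts: "p \<in> P" "q \<in> P" "s \<in> P" using t inc partial_triple_systemD(2)[OF assms(1)] by blast+
  have "p \<noteq> q" "q \<noteq> s" "p \<noteq> s" "t1 \<noteq> t2" "t2 \<noteq> t3" "t1 \<noteq> t3"
    using t inc no_block by metis+
  let ?xs = "[Inl p, Inr t1, Inl q, Inr t2, Inl s, Inr t3]"
  have "incidence_adj P T (?xs ! i) (?xs ! ((i + 1) mod 6))" if "i < 6" for i
  proof -
    have "i = 0 \<or> i = 1 \<or> i = 2 \<or> i = 3 \<or> i = 4 \<or> i = 5" using that by linarith
    then show ?thesis using t inc pts by auto
  qed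
  then have "is_cycle (incidence_vertices P T) (incidence_adj P T) ?xs"
    using t pts \<open>p \<noteq> q\<close> \<open>q \<noteq> s\<close> \<open>p \<noteq> s\<close> \<open>t1 \<noteq> t2\<close> \<open>t2 \<noteq> t3\<close> \<open>t1 \<noteq> t3\<close>
    unfolding is_cycle_def incidence_vertices_def by auto
  then show ?thesis by (intro exI[of _ ?xs]) simp
qed

lemma has_girth_incidence:
  assumes pts: "partial_triple_system P T" and "has_triangle T"
  shows "has_girth (incidence_vertices P T) (incidence_adj P T) 6"
proof -
  have "6 \<le> length xs" if "is_cycle (incidence_vertices P T) (incidence_adj P T) xs" for xs
  proof (rule bipartite_no_square_cycle_length_ge_6[OF _ _ that])
    show "incidence_adj P T u v \<Longrightarrow> u \<in> range Inl \<longleftrightarrow> v \<notin> range Inl" for u v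
      by (auto simp: incidence_adj_iff)
  qed (use incidence_no_square[OF pts] in blast)
  then show ?thesis
    using incidence_hexagon[OF assms] unfolding has_girth_def by blast
qed

lemma degree_incidence_block:
  assumes "partial_triple_system P T" "t \<in> T"
  shows "degree (incidence_vertices P T) (incidence_adj P T) (Inr t) = 3"
proof -
  have "nbhd (incidence_vertices P T) (incidence_adj P T) (Inr t) = Inl ` t"
    using assms(2) partial_triple_systemD(2)[OF assms]
    unfolding nbhd_def incidence_vertices_def by (auto simp: incidence_adj_iff)
  then show ?thesis
    using partial_triple_systemD(3)[OF assms] by (simp add: degree_eq_card_nbhd card_image)
qed

lemma degree_incidence_point:
  assumes "p \<in> P"
  shows "degree (incidence_vertices P T) (incidence_adj P T) (Inl p) = card {t \<in> T. p \<in> t}"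
proof -
  have "nbhd (incidence_vertices P T) (incidence_adj P T) (Inl p) = Inr ` {t \<in> T. p \<in> t}"
    using assms unfolding nbhd_def incidence_vertices_def by (auto simp: incidence_adj_iff)
  then show ?thesis
    by (simp add: degree_eq_card_nbhd card_image)
qed

lemma bipartite_biregular_incidence:
  assumes pts: "partial_triple_system P T" and r: "replication_number P T r" and "has_triangle T"
  shows "bipartite_biregular 3 r 6 (incidence_vertices P T) (incidence_adj P T)"
proof -
  let ?V = "incidence_vertices P T" and ?E = "incidence_adj P T"
  have "simple_graph ?V ?E"
    using pts partial_triple_systemD(1) partial_triple_system_finite_blocks simple_graph_incidence by blast
  moreover have "Inr ` T \<union> Inl ` P = ?V" "Inr ` T \<inter> Inl ` P = {}"
    "\<forall>u v. ?E u v \<longrightarrow> (u \<in> Inr ` T \<and> v \<in> Inl ` P) \<or> (u \<in> Inl ` P \<and> v \<in> Inr ` T)"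
    unfolding incidence_vertices_def by (auto simp: incidence_adj_iff)
  moreover have "\<forall>v \<in> Inr ` T. degree ?V ?E v = 3" "\<forall>v \<in> Inl ` P. degree ?V ?E v = r"
    using degree_incidence_block[OF pts] degree_incidence_point[of _ P T] r
    unfolding replication_number_def by auto
  ultimately show ?thesis
    using has_girth_incidence[OF pts assms(3)] unfolding bipartite_biregular_def by blast
qed

section \<open>Bipartite biregular graphs of degrees 3 and n and girth 6\<close>

locale biregular_3_girth_6 =
  fixes V :: "'a set" and E :: "'a \<Rightarrow> 'a \<Rightarrow> bool" and A B :: "'a set" and n :: nat
  assumes simple: "simple_graph V E" and girth: "has_girth V E 6"
    and parts: "A \<union> B = V" "A \<inter> B = {}"
    and edge_parts: "\<And>u v. E u v \<Longrightarrow> u \<in> A \<and> v \<in> B \<or> u \<in> B \<and> v \<in> A"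
    and degree_A: "\<And>a. a \<in> A \<Longrightarrow> degree V E a = 3"
    and degree_B: "\<And>p. p \<in> B \<Longrightarrow> degree V E p = n"
begin

lemma adj_sym: "E u v \<Longrightarrow> E v u"
  using simple by (simp add: simple_graph_def)

lemma nbhd_subset: "a \<in> A \<Longrightarrow> nbhd V E a \<subseteq> B" "p \<in> B \<Longrightarrow> nbhd V E p \<subseteq> A"
  using edge_parts parts unfolding nbhd_def by blast+

lemma card_nbhd: "a \<in> A \<Longrightarrow> card (nbhd V E a) = 3"
  using degree_A by (simp add: degree_eq_card_nbhd)

lemma common_neighbours_unique:
  assumes "p \<noteq> q" "p \<in> nbhd V E a" "q \<in> nbhd V E a" "p \<in> nbhd V E a'" "q \<in> nbhd V E a'"
  shows "a = a'"
proof (rule ccontr)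
  assume "a \<noteq> a'"
  moreover have "E p a" "E a q" "E q a'" "E a' p"
    using assms(2-5) adj_sym unfolding nbhd_def by blast+
  ultimately show False
    using girth_gt_4_no_square[OF simple girth] assms(1) by fastforce
qed

lemma inj_on_nbhd: "inj_on (nbhd V E) A"
proof (rule inj_onI)
  fix a a' assume a: "a \<in> A" and eq: "nbhd V E a = nbhd V E a'"
  obtain p q s where "nbhd V E a = {p, q, s}" "p \<noteq> q"
    using card_nbhd[OF a] by (auto simp: card_3_iff)
  then show "a = a'"
    using common_neighbours_unique[of p q a a'] eq by simp
qed

lemma partial_triple_system_nbhds: "partial_triple_system B (nbhd V E ` A)"
  unfolding partial_triple_system_def
proof (intro conjI ballI allI impI)
  show "finite B" using simple parts by (auto simp: simple_graph_def)
next
  fix t assume "t \<in> nbhd V E ` A"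
  then show "t \<subseteq> B" "card t = 3" using nbhd_subset card_nbhd by auto
next
  fix t t' p q assume "t \<in> nbhd V E ` A" "t' \<in> nbhd V E ` A"
    and "p \<noteq> q \<and> p \<in> t \<and> q \<in> t \<and> p \<in> t' \<and> q \<in> t'"
  then show "t = t'" using common_neighbours_unique by blast
qed

lemma replication_number_nbhds: "replication_number B (nbhd V E ` A) n"
  unfolding replication_number_def
proof
  fix p assume p: "p \<in> B"
  have "{t \<in> nbhd V E ` A. p \<in> t} = nbhd V E ` nbhd V E p"
    using nbhd_subset(2)[OF p] p parts adj_sym unfolding nbhd_def by blast
  also have "card \<dots> = card (nbhd V E p)"
    using inj_on_subset[OF inj_on_nbhd nbhd_subset(2)[OF p]] by (rule card_image)
  finally show "card {t \<in> nbhd V E ` A. p \<in> t} = n"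
    using degree_B[OF p] by (simp add: degree_eq_card_nbhd)
qed

definition incidence_label :: "'a \<Rightarrow> 'a + 'a set" where
  "incidence_label v = (if v \<in> B then Inl v else Inr (nbhd V E v))"

lemma incidence_label_B: "p \<in> B \<Longrightarrow> incidence_label p = Inl p"
  by (simp add: incidence_label_def)

lemma incidence_label_A: "a \<in> A \<Longrightarrow> incidence_label a = Inr (nbhd V E a)"
  using parts by (auto simp: incidence_label_def)

lemma inj_on_incidence_label: "inj_on incidence_label V"
proof (rule inj_onI)
  fix u v assume "u \<in> V" "v \<in> V" and eq: "incidence_label u = incidence_label v"
  then consider "u \<in> B" "v \<in> B" | "u \<in> A" "v \<in> A" | "u \<in> A" "v \<in> B" | "u \<in> B" "v \<in> A"
    using parts by blast
  then show "u = v"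
  proof cases
    case 2
    then have "nbhd V E u = nbhd V E v" using incidence_label_A eq by simp
    then show ?thesis using inj_on_nbhd 2 by (simp add: inj_on_eq_iff)
  qed (use incidence_label_A incidence_label_B eq in simp_all)
qed

lemma incidence_label_image: "incidence_label ` V = incidence_vertices B (nbhd V E ` A)"
proof -
  have "incidence_label ` B = Inl ` B"
    by (rule image_cong) (simp_all add: incidence_label_B)
  moreover have "incidence_label ` A = Inr ` nbhd V E ` A"
    unfolding image_image by (rule image_cong) (simp_all add: incidence_label_A)
  moreover have "incidence_label ` V = incidence_label ` B \<union> incidence_label ` A"
    using parts(1) by blast
  ultimately show ?thesis by (simp add: incidence_vertices_def)
qed

lemma adj_iff_incidence_adj:
  assumes "u \<in> V" "v \<in> V"
  shows "E u v \<longleftrightarrow> incidence_adj B (nbhd V E ` A) (incidence_label u) (incidence_label v)"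
proof -
  have "u \<in> A \<union> B" "v \<in> A \<union> B" using assms parts(1) by simp_all
  then consider "u \<in> B" "v \<in> B" | "u \<in> A" "v \<in> A" | "u \<in> A" "v \<in> B" | "u \<in> B" "v \<in> A"
    by blast
  then show ?thesis
  proof cases
    case 1
    then have "\<not> E u v" using edge_parts parts(2) by blast
    then show ?thesis using 1 incidence_label_B by simp
  next
    case 2
    then have "\<not> E u v" using edge_parts parts(2) by blast
    then show ?thesis using 2 incidence_label_A by simp
  next
    case 3
    then have "nbhd V E u \<in> nbhd V E ` A" "v \<in> nbhd V E u \<longleftrightarrow> E u v"
      using assms(2) by (auto simp: nbhd_def)
    then show ?thesis using 3 incidence_label_A incidence_label_B by simp
  next
    case 4
    then have "nbhd V E v \<in> nbhd V E ` A" "u \<in> nbhd V E v \<longleftrightarrow> E u v"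
      using assms(1) adj_sym[of u v] adj_sym[of v u] by (auto simp: nbhd_def)
    then show ?thesis using 4 incidence_label_A incidence_label_B by simp
  qed
qed

lemma graph_iso_incidence_nbhds:
  "graph_iso V E (incidence_vertices B (nbhd V E ` A)) (incidence_adj B (nbhd V E ` A))"
  unfolding graph_iso_def
proof (intro exI[of _ incidence_label] conjI ballI)
  show "bij_betw incidence_label V (incidence_vertices B (nbhd V E ` A))"
    using inj_on_incidence_label incidence_label_image by (simp add: bij_betw_def)
qed (rule adj_iff_incidence_adj)

lemma B_nonempty: "B \<noteq> {}"
proof -
  obtain xs where "is_cycle V E xs" "length xs = 6"
    using girth by (auto simp: has_girth_def)
  then have "\<forall>i < length xs. E (xs ! i) (xs ! ((i + 1) mod length xs))" "0 < length xs"
    by (simp_all add: is_cycle_def)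
  then have "E (xs ! 0) (xs ! ((0 + 1) mod length xs))"
    by blast
  then show ?thesis using edge_parts by blast
qed

end

lemma bipartite_biregular_3_6_incidence:
  fixes V :: "'a set"
  assumes "bipartite_biregular 3 n 6 V E"
  obtains P :: "'a set" and T where "partial_triple_system P T" "replication_number P T n" "P \<noteq> {}"
    "graph_iso V E (incidence_vertices P T) (incidence_adj P T)"
proof -
  obtain A B where "biregular_3_girth_6 V E A B n"
    using assms unfolding bipartite_biregular_def biregular_3_girth_6_def by blast
  then interpret biregular_3_girth_6 V E A B n .
  show thesis
    by (rule that[OF partial_triple_system_nbhds replication_number_nbhds B_nonempty
          graph_iso_incidence_nbhds])
qed

section \<open>Skolem's construction\<close>

definition skolem_halve :: "nat \<Rightarrow> nat \<Rightarrow> nat" where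
  "skolem_halve m s = (if even s then s div 2 else m + s div 2)"

definition skolem_unhalve :: "nat \<Rightarrow> nat \<Rightarrow> nat" where
  "skolem_unhalve m z = (if z < m then 2 * z else 2 * (z - m) + 1)"

(* Skolem's half-idempotent commutative quasigroup on {0..<2m}:
   x o x = x and (x + m) o (x + m) = x for x < m. *)
definition skolem_op :: "nat \<Rightarrow> nat \<Rightarrow> nat \<Rightarrow> nat" where
  "skolem_op m x y = skolem_halve m ((x + y) mod (2 * m))"

definition skolem_div :: "nat \<Rightarrow> nat \<Rightarrow> nat \<Rightarrow> nat" where
  "skolem_div m x z = (skolem_unhalve m z + 2 * m - x) mod (2 * m)"

lemma skolem_halve_less: "s < 2 * m \<Longrightarrow> skolem_halve m s < 2 * m"
  by (auto simp: skolem_halve_def)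

lemma skolem_unhalve_less: "z < 2 * m \<Longrightarrow> skolem_unhalve m z < 2 * m"
  by (auto simp: skolem_unhalve_def)

lemma skolem_halve_unhalve: "z < 2 * m \<Longrightarrow> skolem_halve m (skolem_unhalve m z) = z"
  by (auto simp: skolem_halve_def skolem_unhalve_def)

lemma skolem_unhalve_halve: "s < 2 * m \<Longrightarrow> skolem_unhalve m (skolem_halve m s) = s"
  by (auto simp: skolem_halve_def skolem_unhalve_def elim!: evenE oddE)

lemma skolem_op_less: "0 < m \<Longrightarrow> skolem_op m x y < 2 * m"
  unfolding skolem_op_def by (rule skolem_halve_less) simp

lemma skolem_op_commute: "skolem_op m x y = skolem_op m y x"
  by (simp add: skolem_op_def add.commute)

lemma skolem_op_cancel:
  assumes "0 < m" "y < 2 * m" "y' < 2 * m" "skolem_op m x y = skolem_op m x y'"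
  shows "y = y'"
proof -
  have "skolem_unhalve m (skolem_op m x y) = skolem_unhalve m (skolem_op m x y')"
    using assms(4) by simp
  then have "(x + y) mod (2 * m) = (x + y') mod (2 * m)"
    unfolding skolem_op_def using assms(1) by (simp add: skolem_unhalve_halve)
  then have "y mod (2 * m) = y' mod (2 * m)"
    by (simp add: nat_mod_eq_iff)
  then show ?thesis
    using assms(2,3) by simp
qed

lemma skolem_op_self: "x < 2 * m \<Longrightarrow> skolem_op m x x = (if x < m then x else x - m)"
proof -
  assume x: "x < 2 * m"
  have "(x + x) mod (2 * m) = (if x < m then 2 * x else 2 * (x - m))"
    using x by (auto simp: le_mod_geq mod_if)
  then show ?thesis
    by (simp add: skolem_op_def skolem_halve_def)
qed

lemma skolem_div:
  assumes "0 < m" "x < 2 * m" "z < 2 * m"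
  shows "skolem_div m x z < 2 * m" "skolem_op m x (skolem_div m x z) = z"
proof -
  show "skolem_div m x z < 2 * m" unfolding skolem_div_def using assms(1) by simp
  have "(x + skolem_div m x z) mod (2 * m) = (skolem_unhalve m z + 2 * m) mod (2 * m)"
    unfolding skolem_div_def using assms(2) by (simp add: mod_add_right_eq)
  also have "\<dots> = skolem_unhalve m z"
    using skolem_unhalve_less[OF assms(3)] by simp
  finally show "skolem_op m x (skolem_div m x z) = z"
    unfolding skolem_op_def using assms(3) by (simp add: skolem_halve_unhalve)
qed

lemma skolem_div_op: "0 < m \<Longrightarrow> x < 2 * m \<Longrightarrow> y < 2 * m \<Longrightarrow> skolem_div m x (skolem_op m x y) = y"
  using skolem_div[of m x "skolem_op m x y"] skolem_op_less skolem_op_cancel by metis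

(* Skolem's Steiner triple system of order 6m+1 consists of skolem_blocks m and the triples
   {infinity, p, skolem_mate m p}; the point at infinity is not represented. *)
definition skolem_points :: "nat \<Rightarrow> (nat \<times> nat) set" where
  "skolem_points m = {0..<2 * m} \<times> {0..<3}"

definition vertical_block :: "nat \<Rightarrow> (nat \<times> nat) set" where
  "vertical_block x = {(x, 0), (x, 1), (x, 2)}"

definition skolem_block :: "nat \<Rightarrow> nat \<Rightarrow> nat \<Rightarrow> nat \<Rightarrow> (nat \<times> nat) set" where
  "skolem_block m x y i = {(x, i), (y, i), (skolem_op m x y, (i + 1) mod 3)}"

definition skolem_blocks :: "nat \<Rightarrow> (nat \<times> nat) set set" where
  "skolem_blocks m = vertical_block ` {0..<m} \<union>
     {skolem_block m x y i | x y i. x < 2 * m \<and> y < 2 * m \<and> x \<noteq> y \<and> i < 3}"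

(* The block through two distinct collinear points, computed explicitly: every block equals
   skolem_line m p q for any two of its points, which gives linearity. *)
definition skolem_line :: "nat \<Rightarrow> nat \<times> nat \<Rightarrow> nat \<times> nat \<Rightarrow> (nat \<times> nat) set" where
  "skolem_line m p q =
     (if snd p = snd q then skolem_block m (fst p) (fst q) (snd p)
      else if fst p = fst q \<and> fst p < m then vertical_block (fst p)
      else if snd q = (snd p + 1) mod 3 then skolem_block m (fst p) (skolem_div m (fst p) (fst q)) (snd p)
      else skolem_block m (fst q) (skolem_div m (fst q) (fst p)) (snd q))"

definition skolem_mate :: "nat \<Rightarrow> nat \<times> nat \<Rightarrow> nat \<times> nat" where
  "skolem_mate m p =
     (if m \<le> fst p then (fst p - m, (snd p + 1) mod 3) else (fst p + m, (snd p + 2) mod 3))"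

lemma skolem_blocks_cases:
  assumes "t \<in> skolem_blocks m"
  obtains (vertical) x where "x < m" "t = vertical_block x"
    | (skolem) x y i where "x < 2 * m" "y < 2 * m" "x \<noteq> y" "i < 3" "t = skolem_block m x y i"
  using assms unfolding skolem_blocks_def by auto

lemma vertical_block_mem: "x < m \<Longrightarrow> vertical_block x \<in> skolem_blocks m"
  unfolding skolem_blocks_def by auto

lemma skolem_block_mem:
  "x < 2 * m \<Longrightarrow> y < 2 * m \<Longrightarrow> x \<noteq> y \<Longrightarrow> i < 3 \<Longrightarrow> skolem_block m x y i \<in> skolem_blocks m"
  unfolding skolem_blocks_def by blast

lemma skolem_block_commute: "skolem_block m x y i = skolem_block m y x i"
  unfolding skolem_block_def by (auto simp: skolem_op_commute)

lemma skolem_op_ne_self: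
  assumes "0 < m" "x < 2 * m" "y < 2 * m" "x \<noteq> y" "x < m"
  shows "skolem_op m x y \<noteq> x"
proof
  assume "skolem_op m x y = x"
  moreover have "skolem_op m x x = x" using skolem_op_self[OF assms(2)] assms(5) by simp
  ultimately show False using skolem_op_cancel[OF assms(1,3,2), of x] assms(4) by simp
qed

lemma skolem_line_apex:
  assumes m: "0 < m" and xy: "x < 2 * m" "y < 2 * m" "x \<noteq> y" and i: "i < 3"
  shows "skolem_line m (x, i) (skolem_op m x y, (i + 1) mod 3) = skolem_block m x y i"
    and "skolem_line m (skolem_op m x y, (i + 1) mod 3) (x, i) = skolem_block m x y i"
proof -
  have not_vertical: "\<not> (skolem_op m x y = x \<and> x < m)"
    using skolem_op_ne_self[OF m xy] by blast
  have "(i + 1) mod 3 \<noteq> i" "((i + 1) mod 3 + 1) mod 3 \<noteq> i" using i by presburger+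
  then show "skolem_line m (x, i) (skolem_op m x y, (i + 1) mod 3) = skolem_block m x y i"
    "skolem_line m (skolem_op m x y, (i + 1) mod 3) (x, i) = skolem_block m x y i"
    using not_vertical skolem_div_op[OF m xy(1,2)] unfolding skolem_line_def by auto
qed

lemma skolem_line_skolem_block:
  assumes m: "0 < m" and xy: "x < 2 * m" "y < 2 * m" "x \<noteq> y" and i: "i < 3"
    and pq: "p \<in> skolem_block m x y i" "q \<in> skolem_block m x y i" "p \<noteq> q"
  shows "skolem_line m p q = skolem_block m x y i"
proof -
  have "skolem_line m (y, i) (skolem_op m x y, (i + 1) mod 3) = skolem_block m x y i"
    "skolem_line m (skolem_op m x y, (i + 1) mod 3) (y, i) = skolem_block m x y i"
    using skolem_line_apex[OF m xy(2,1) _ i] xy(3)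
    by (simp_all only: skolem_op_commute[of m y x] skolem_block_commute[of m y x] simp_thms)
  moreover have "skolem_line m (x, i) (y, i) = skolem_block m x y i"
    "skolem_line m (y, i) (x, i) = skolem_block m x y i"
    unfolding skolem_line_def using skolem_block_commute by auto
  moreover have "p \<in> {(x, i), (y, i), (skolem_op m x y, (i + 1) mod 3)}"
    "q \<in> {(x, i), (y, i), (skolem_op m x y, (i + 1) mod 3)}"
    using pq(1,2) unfolding skolem_block_def .
  ultimately show ?thesis
    using pq(3) skolem_line_apex[OF m xy i] by auto
qed

lemma skolem_line_vertical_block:
  assumes "x < m" "p \<in> vertical_block x" "q \<in> vertical_block x" "p \<noteq> q"
  shows "skolem_line m p q = vertical_block x"
proof -
  have "fst p = x" "fst q = x" "snd p \<noteq> snd q"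
    using assms(2-4) unfolding vertical_block_def by auto
  then show ?thesis using assms(1) by (simp add: skolem_line_def)
qed

lemma skolem_blocks_eq_line:
  assumes "0 < m" "t \<in> skolem_blocks m" "p \<in> t" "q \<in> t" "p \<noteq> q"
  shows "t = skolem_line m p q"
  using assms(2)
proof (cases rule: skolem_blocks_cases)
  case vertical
  then show ?thesis using skolem_line_vertical_block assms(3-5) by simp
next
  case skolem
  then show ?thesis using skolem_line_skolem_block[OF assms(1)] assms(3-5) by simp
qed

lemma partial_triple_system_skolem:
  assumes "0 < m"
  shows "partial_triple_system (skolem_points m) (skolem_blocks m)"
  unfolding partial_triple_system_def
proof (intro conjI ballI allI impI)
  show "finite (skolem_points m)" by (simp add: skolem_points_def)
next
  fix t assume "t \<in> skolem_blocks m"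
  then have "t \<subseteq> skolem_points m \<and> card t = 3"
  proof (cases rule: skolem_blocks_cases)
    case (skolem x y i)
    moreover have "(i + 1) mod 3 \<noteq> i" "(i + 1) mod 3 < 3" using skolem(4) by presburger+
    ultimately show ?thesis
      using skolem_op_less[OF assms] unfolding skolem_block_def skolem_points_def by auto
  qed (auto simp: vertical_block_def skolem_points_def)
  then show "t \<subseteq> skolem_points m" "card t = 3" by simp_all
next
  fix t t' p q assume "t \<in> skolem_blocks m" "t' \<in> skolem_blocks m"
    and "p \<noteq> q \<and> p \<in> t \<and> q \<in> t \<and> p \<in> t' \<and> q \<in> t'"
  then show "t = t'" using skolem_blocks_eq_line[OF assms] by metis
qed

lemma skolem_mate_mem: "p \<in> skolem_points m \<Longrightarrow> skolem_mate m p \<in> skolem_points m"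
  unfolding skolem_mate_def skolem_points_def by (auto simp: mem_Times_iff)

lemma skolem_mate_ne: "0 < m \<Longrightarrow> skolem_mate m p \<noteq> p"
  unfolding skolem_mate_def by (cases p) auto

lemma skolem_mate_mate:
  assumes "p \<in> skolem_points m"
  shows "skolem_mate m (skolem_mate m p) = p"
proof -
  obtain a i where p: "p = (a, i)" "a < 2 * m" "i < 3"
    using assms unfolding skolem_points_def by auto
  have "((i + 1) mod 3 + 2) mod 3 = i" "((i + 2) mod 3 + 1) mod 3 = i"
    using p(3) by presburger+
  then show ?thesis
    using p by (auto simp: skolem_mate_def)
qed

lemma skolem_upper_mate_not_collinear:
  assumes m: "0 < m" and a: "m \<le> a" "a < 2 * m" and i: "i < 3" and t: "t \<in> skolem_blocks m"
    and mem: "(a, i) \<in> t" "(a - m, (i + 1) mod 3) \<in> t"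
  shows False
  using t
proof (cases rule: skolem_blocks_cases)
  case vertical
  then show False using mem(1) a(1) unfolding vertical_block_def by auto
next
  case (skolem x y k)
  have layers: "(i + 1) mod 3 \<noteq> i" "(k + 1) mod 3 \<noteq> k" "((k + 1) mod 3 + 1) mod 3 \<noteq> k"
    using i skolem(4) by presburger+
  have self: "skolem_op m a a = a - m" using skolem_op_self[OF a(2)] a(1) by simp
  have "(a, i) = (x, k) \<or> (a, i) = (y, k) \<or> (a, i) = (skolem_op m x y, (k + 1) mod 3)"
    using mem(1) skolem(5) unfolding skolem_block_def by auto
  moreover have "(a - m, (i + 1) mod 3) \<in> {(x, k), (y, k), (skolem_op m x y, (k + 1) mod 3)}"
    using mem(2) unfolding skolem(5) skolem_block_def .
  ultimately consider "a = x" "skolem_op m x y = a - m" | "a = y" "skolem_op m x y = a - m"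
    using layers by auto
  then show False
  proof cases
    case 1
    then show False using skolem_op_cancel[OF m skolem(2) a(2), of a] self skolem(3) by simp
  next
    case 2
    then show False
      using skolem_op_cancel[OF m skolem(1) a(2), of a] self skolem(3) skolem_op_commute by metis
  qed
qed

lemma skolem_mate_not_collinear:
  assumes m: "0 < m" and p: "p \<in> skolem_points m"
  shows "\<not> collinear (skolem_blocks m) p (skolem_mate m p)"
proof
  assume "collinear (skolem_blocks m) p (skolem_mate m p)"
  then obtain t where t: "t \<in> skolem_blocks m" "p \<in> t" "skolem_mate m p \<in> t"
    unfolding collinear_def by blast
  obtain a i where ai: "p = (a, i)" "a < 2 * m" "i < 3"
    using p unfolding skolem_points_def by auto
  show False
  proof (cases "m \<le> a")
    case True
    then show False
      using skolem_upper_mate_not_collinear[OF m True ai(2,3) t(1)] t(2,3) ai(1)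
      by (simp add: skolem_mate_def)
  next
    case False
    let ?q = "skolem_mate m p"
    have q: "?q = (a + m, (i + 2) mod 3)" using False ai(1) by (simp add: skolem_mate_def)
    have "skolem_mate m ?q = p" using skolem_mate_mate[OF p] .
    then have "(a + m - m, ((i + 2) mod 3 + 1) mod 3) \<in> t"
      using q t(2) by (simp add: skolem_mate_def)
    moreover have "m \<le> a + m" "a + m < 2 * m" "(i + 2) mod 3 < 3" using False ai(2) by auto
    moreover have "(a + m, (i + 2) mod 3) \<in> t" using t(3) q by simp
    ultimately show False
      using skolem_upper_mate_not_collinear[OF m _ _ _ t(1)] by blast
  qed
qed

lemma skolem_collinear_next_layer:
  assumes m: "0 < m" and a: "a < 2 * m" and b: "b < 2 * m" and i: "i < 3"
    and not_vertical: "\<not> (a = b \<and> a < m)"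
    and not_mate: "(b, (i + 1) mod 3) \<noteq> skolem_mate m (a, i)"
  shows "collinear (skolem_blocks m) (a, i) (b, (i + 1) mod 3)"
proof -
  define y where "y = skolem_div m a b"
  have y: "y < 2 * m" "skolem_op m a y = b" using skolem_div[OF m a b] y_def by auto
  have "y \<noteq> a"
  proof
    assume "y = a"
    then have "b = (if a < m then a else a - m)" using y(2) skolem_op_self[OF a] by simp
    then show False using not_vertical not_mate by (auto simp: skolem_mate_def split: if_splits)
  qed
  then show ?thesis
    using y by (intro collinearI[OF skolem_block_mem[OF a y(1) _ i]]) (simp_all add: skolem_block_def)
qed

lemma skolem_collinear_unless_mate:
  assumes m: "0 < m" and p: "p \<in> skolem_points m" and q: "q \<in> skolem_points m"
    and "p \<noteq> q" "q \<noteq> skolem_mate m p"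
  shows "collinear (skolem_blocks m) p q"
proof -
  obtain a i where ai: "p = (a, i)" "a < 2 * m" "i < 3" using p unfolding skolem_points_def by auto
  obtain b j where bj: "q = (b, j)" "b < 2 * m" "j < 3" using q unfolding skolem_points_def by auto
  have "i = 0 \<or> i = 1 \<or> i = 2" "j = 0 \<or> j = 1 \<or> j = 2"
    using ai(3) bj(3) by linarith+
  then have "i = j \<or> j = (i + 1) mod 3 \<or> i = (j + 1) mod 3"
    by auto
  then consider "i = j" | "a = b" "a < m" | "j = (i + 1) mod 3" "\<not> (a = b \<and> a < m)"
    | "i = (j + 1) mod 3" "\<not> (a = b \<and> a < m)"
    by blast
  then show ?thesis
  proof cases
    case 1
    then have "a \<noteq> b" using \<open>p \<noteq> q\<close> ai bj by simp
    then show ?thesis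
      using ai bj 1 by (intro collinearI[OF skolem_block_mem[OF ai(2) bj(2) _ ai(3)]])
        (simp_all add: skolem_block_def)
  next
    case 2
    then show ?thesis
      using ai bj \<open>i = 0 \<or> i = 1 \<or> i = 2\<close> \<open>j = 0 \<or> j = 1 \<or> j = 2\<close>
      by (intro collinearI[OF vertical_block_mem[OF 2(2)]]) (auto simp: vertical_block_def)
  next
    case 3
    then show ?thesis
      using skolem_collinear_next_layer[OF m ai(2) bj(2) ai(3)] ai bj \<open>q \<noteq> skolem_mate m p\<close> by simp
  next
    case 4
    have "p \<noteq> skolem_mate m q"
      using skolem_mate_mate[OF q] \<open>q \<noteq> skolem_mate m p\<close> by auto
    then have "collinear (skolem_blocks m) q p"
      using skolem_collinear_next_layer[OF m bj(2) ai(2) bj(3)] ai bj 4 by auto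
    then show ?thesis by (simp add: collinear_commute)
  qed
qed

lemma skolem_collinear_points:
  assumes m: "0 < m" and p: "p \<in> skolem_points m"
  shows "\<Union>{t \<in> skolem_blocks m. p \<in> t} - {p} = skolem_points m - {p, skolem_mate m p}"
proof (intro equalityI subsetI)
  fix q assume "q \<in> \<Union>{t \<in> skolem_blocks m. p \<in> t} - {p}"
  then obtain t where t: "t \<in> skolem_blocks m" "p \<in> t" "q \<in> t" "q \<noteq> p" by blast
  then have "q \<in> skolem_points m"
    using partial_triple_systemD(2)[OF partial_triple_system_skolem[OF m]] by blast
  moreover have "q \<noteq> skolem_mate m p"
    using skolem_mate_not_collinear[OF m p] collinearI[OF t(1-3)] by blast
  ultimately show "q \<in> skolem_points m - {p, skolem_mate m p}" using t(4) by blast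
next
  fix q assume q: "q \<in> skolem_points m - {p, skolem_mate m p}"
  then have "collinear (skolem_blocks m) p q"
    using skolem_collinear_unless_mate[OF m p, of q] by blast
  moreover have "q \<noteq> p" using q by blast
  ultimately show "q \<in> \<Union>{t \<in> skolem_blocks m. p \<in> t} - {p}"
    unfolding collinear_def by blast
qed

lemma card_skolem_points: "card (skolem_points m) = 6 * m"
  unfolding skolem_points_def by (simp add: card_cartesian_product)

lemma replication_number_skolem:
  assumes m: "0 < m"
  shows "replication_number (skolem_points m) (skolem_blocks m) (3 * m - 1)"
  unfolding replication_number_def
proof
  fix p assume p: "p \<in> skolem_points m"
  have "{p, skolem_mate m p} \<subseteq> skolem_points m" "card {p, skolem_mate m p} = 2"
    using p skolem_mate_mem[OF p] skolem_mate_ne[OF m, of p] by auto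
  then have "card (skolem_points m - {p, skolem_mate m p}) = 6 * m - 2"
    by (simp add: card_Diff_subset card_skolem_points)
  then have "2 * card {t \<in> skolem_blocks m. p \<in> t} = 6 * m - 2"
    using card_collinear_points[OF partial_triple_system_skolem[OF m], of p]
      skolem_collinear_points[OF m p] by simp
  then show "card {t \<in> skolem_blocks m. p \<in> t} = 3 * m - 1" by linarith
qed

lemma has_triangle_skolem:
  assumes m: "0 < m"
  shows "has_triangle (skolem_blocks m)"
proof -
  let ?T = "skolem_blocks m"
  have pts: "(0, 0) \<in> skolem_points m" "(0, 1) \<in> skolem_points m" "(m, 1) \<in> skolem_points m"
    using m by (simp_all add: skolem_points_def)
  have vertical: "vertical_block 0 \<in> ?T" "(0, 0) \<in> vertical_block 0" "(0, 1) \<in> vertical_block 0"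
    using vertical_block_mem[OF m] by (simp_all add: vertical_block_def)
  have "collinear ?T (0, 0) (0, 1)"
    using collinearI[OF vertical] .
  moreover have "collinear ?T (0, 1) (m, 1)" "collinear ?T (0, 0) (m, 1)"
    using skolem_collinear_unless_mate[OF m pts(2,3)] skolem_collinear_unless_mate[OF m pts(1,3)] m
    by (simp_all add: skolem_mate_def)
  moreover have "\<not> (\<exists>t \<in> ?T. (0, 0) \<in> t \<and> (0, 1) \<in> t \<and> (m, 1) \<in> t)"
  proof
    assume "\<exists>t \<in> ?T. (0, 0) \<in> t \<and> (0, 1) \<in> t \<and> (m, 1) \<in> t"
    then obtain t where t: "t \<in> ?T" "(0, 0) \<in> t" "(0, 1) \<in> t" "(m, 1) \<in> t" by blast
    have "t = vertical_block 0"
      using partial_triple_systemD(4)[OF partial_triple_system_skolem[OF m] t(1) vertical(1) _ t(2,3) vertical(2,3)]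
      by simp
    then show False using t(4) m by (simp add: vertical_block_def)
  qed
  ultimately show ?thesis
    unfolding has_triangle_def by (metis collinear_commute)
qed

section \<open>Cages\<close>

lemma bipartite_biregular_3_6_card_ge:
  fixes V :: "'a set"
  assumes "bipartite_biregular 3 n 6 V E" "n mod 3 = 2"
  shows "(n + 3) * (2 * n + 2) \<le> 3 * card V"
proof -
  obtain P :: "'a set" and T where pts: "partial_triple_system P T" and r: "replication_number P T n"
    and "P \<noteq> {}" and iso: "graph_iso V E (incidence_vertices P T) (incidence_adj P T)"
    using bipartite_biregular_3_6_incidence[OF assms(1)] by blast
  have "(n + 3) * (2 * n + 2) \<le> (n + 3) * card P"
    by (rule mult_le_mono2[OF card_points_ge_mod_3[OF pts r \<open>P \<noteq> {}\<close> assms(2)]])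
  also have "\<dots> = 3 * card (incidence_vertices P T)"
    using three_card_incidence_vertices[OF pts r] by simp
  also have "\<dots> = 3 * card V"
    using graph_iso_card[OF iso] by simp
  finally show ?thesis .
qed

lemma ex_bipartite_biregular_3_6:
  assumes "n mod 3 = 2"
  shows "\<exists>(V :: nat set) E. bipartite_biregular 3 n 6 V E \<and> 3 * card V = (n + 3) * (2 * n + 2)"
proof -
  define m where "m = (n + 1) div 3"
  have m: "0 < m" "n = 3 * m - 1" "2 * n + 2 = 6 * m"
    using assms unfolding m_def by presburger+
  let ?P = "skolem_points m" and ?T = "skolem_blocks m"
  have pts: "partial_triple_system ?P ?T" and r: "replication_number ?P ?T n"
    using partial_triple_system_skolem[OF m(1)] replication_number_skolem[OF m(1)] m(2) by simp_all
  obtain V :: "nat set" and E where bb: "bipartite_biregular 3 n 6 V E"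
    and iso: "graph_iso (incidence_vertices ?P ?T) (incidence_adj ?P ?T) V E"
    using bipartite_biregular_nat[OF bipartite_biregular_incidence[OF pts r has_triangle_skolem[OF m(1)]]]
    by blast
  have "3 * card V = (n + 3) * (2 * n + 2)"
    using three_card_incidence_vertices[OF pts r] graph_iso_card[OF iso] card_skolem_points[of m] m(3)
    by simp
  then show ?thesis using bb by blast
qed

lemma extremal_bipartite_biregular_3_6:
  fixes V :: "'a set"
  assumes bb: "bipartite_biregular 3 n 6 V E" and n: "n mod 3 = 2"
    and card: "3 * card V \<le> (n + 3) * (2 * n + 2)"
  shows "\<exists>(P :: nat set) T x. steiner_triple_system P T \<and> card P = 2 * n + 3 \<and> x \<in> P \<and>
    graph_iso V E (incidence_vertices (del_points P x) (del_triples T x))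
      (incidence_adj (del_points P x) (del_triples T x))"
proof -
  obtain V' :: "nat set" and E' where bb': "bipartite_biregular 3 n 6 V' E'" and iso: "graph_iso V E V' E'"
    using bipartite_biregular_nat[OF bb] by blast
  obtain P :: "nat set" and T where pts: "partial_triple_system P T" and r: "replication_number P T n"
    and "P \<noteq> {}" and iso': "graph_iso V' E' (incidence_vertices P T) (incidence_adj P T)"
    using bipartite_biregular_3_6_incidence[OF bb'] by blast
  have "(n + 3) * card P \<le> (n + 3) * (2 * n + 2)"
    using card three_card_incidence_vertices[OF pts r] graph_iso_card[OF iso] graph_iso_card[OF iso'] by simp
  then have "card P \<le> 2 * n + 2"
    by (subst (asm) mult_le_cancel1) simp
  then have cardP: "card P = 2 * n + 2"
    using card_points_ge_mod_3[OF pts r \<open>P \<noteq> {}\<close> n] by simp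
  have fin: "finite P" using pts by (rule partial_triple_systemD)
  obtain x where x: "x \<notin> P" using ex_new_if_finite[OF infinite_UNIV_nat fin] by blast
  have mate: "\<exists>!q. q \<in> P \<and> q \<noteq> p \<and> \<not> collinear T p q" if "p \<in> P" for p
    using unique_noncollinear[OF pts r cardP that] .
  show ?thesis
  proof (intro exI conjI)
    show "steiner_triple_system (insert x P) (T \<union> mate_triples P T x)"
      using steiner_triple_system_mate_extension[OF pts mate x] .
    show "card (insert x P) = 2 * n + 3" using fin x cardP by simp
    show "x \<in> insert x P" by simp
    show "graph_iso V E
      (incidence_vertices (del_points (insert x P) x) (del_triples (T \<union> mate_triples P T x) x))
      (incidence_adj (del_points (insert x P) x) (del_triples (T \<union> mate_triples P T x) x))"
      using graph_iso_trans[OF iso iso'] del_mate_extension[OF pts mate x] by simp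
  qed
qed

lemma bb_cage_3_6_iff:
  fixes V :: "'a set"
  assumes n: "n mod 3 = 2"
  shows "bb_cage 3 n 6 V E \<longleftrightarrow>
    bipartite_biregular 3 n 6 V E \<and> 3 * card V = (n + 3) * (2 * n + 2)"
proof
  assume "bb_cage 3 n 6 V E"
  moreover obtain V0 :: "nat set" and E0 where "bipartite_biregular 3 n 6 V0 E0"
    and card0: "3 * card V0 = (n + 3) * (2 * n + 2)"
    using ex_bipartite_biregular_3_6[OF n] by blast
  ultimately have bb: "bipartite_biregular 3 n 6 V E" and "card V \<le> card V0"
    unfolding bb_cage_def by auto
  then show "bipartite_biregular 3 n 6 V E \<and> 3 * card V = (n + 3) * (2 * n + 2)"
    using bipartite_biregular_3_6_card_ge[OF bb n] card0 by linarith
next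
  assume bb: "bipartite_biregular 3 n 6 V E \<and> 3 * card V = (n + 3) * (2 * n + 2)"
  show "bb_cage 3 n 6 V E"
    unfolding bb_cage_def
  proof (intro conjI allI impI)
    fix V' :: "nat set" and E' assume "bipartite_biregular 3 n 6 V' E'"
    then show "card V \<le> card V'"
      using bipartite_biregular_3_6_card_ge[OF _ n] bb by fastforce
  qed (use bb in blast)
qed

theorem mainTheorem2:
  fixes n :: nat
  assumes "n > 0" and "n mod 3 = 2"
  shows "(\<exists>(V :: nat set) E. bb_cage 3 n 6 V E \<and> 3 * card V = 3 * (2 + 2 * n) + (2 + 2 * n) * n)
    \<and> (\<forall>(V :: 'a set) E. bb_cage 3 n 6 V E \<longrightarrow>
         (\<exists>(P :: nat set) T x. steiner_triple_system P T \<and> card P = 2 * n + 3 \<and> x \<in> P \<and>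
            graph_iso V E
              (incidence_vertices (del_points P x) (del_triples T x))
              (incidence_adj (del_points P x) (del_triples T x))))"
proof -
  (* The hypothesis n > 0 is implied by n mod 3 = 2. *)
  obtain V0 :: "nat set" and E0 where bb0: "bipartite_biregular 3 n 6 V0 E0"
    and card0: "3 * card V0 = (n + 3) * (2 * n + 2)"
    using ex_bipartite_biregular_3_6[OF assms(2)] by blast
  have "bb_cage 3 n 6 V0 E0"
    using bb0 card0 bb_cage_3_6_iff[OF assms(2)] by blast
  moreover have "3 * card V0 = 3 * (2 + 2 * n) + (2 + 2 * n) * n"
    using card0 by (simp add: algebra_simps)
  moreover have "\<exists>(P :: nat set) T x. steiner_triple_system P T \<and> card P = 2 * n + 3 \<and> x \<in> P \<and>
      graph_iso V E (incidence_vertices (del_points P x) (del_triples T x))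
        (incidence_adj (del_points P x) (del_triples T x))"
    if "bb_cage 3 n 6 V E" for V :: "'a set" and E
  proof -
    have "bipartite_biregular 3 n 6 V E" "3 * card V \<le> (n + 3) * (2 * n + 2)"
      using that unfolding bb_cage_3_6_iff[OF assms(2)] by simp_all
    then show ?thesis by (rule extremal_bipartite_biregular_3_6[OF _ assms(2)])
  qed
  ultimately show ?thesis by blast
qed

end
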